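(* Let $\alpha,b,\beta>0$ with $\alpha<\frac d2$, and let $x_1,\dots,x_n\in\mathbb{R}^d$ span $\mathbb{R}^d$ and satisfy, for every subspace $L\subset\mathbb{R}^d$ of dimension $1\le d_L<d$, $$\frac{|\{i: x_i\in L\}|}{n}<\frac{d_L}{d-2\alpha}.$$ Then the Kotz log-likelihood $\mathcal{L}(S)=-\frac n2\log\det S+\sum_{i=1}^n\log\varphi(x_i^TS^{-1}x_i)$ with $\varphi(t)=t^{\alpha-d/2}\exp(-(t/b)^\beta)$ attains its maximum over $S\in\mathbb{P}_d$.
   Context: $\mathbb{P}_d$ denotes $d\times d$ real symmetric positive definite matrices. *)

theory Defs
  imports "HOL-Analysis.Analysis"
begin

text \<open>Symmetric positive definite d x d real matrices (the cone P_d); d = CARD('d).\<close>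
definition spd :: "real^'d^'d \<Rightarrow> bool" where
  "spd S \<longleftrightarrow> transpose S = S \<and> (\<forall>x::real^'d. x \<noteq> 0 \<longrightarrow> 0 < x \<bullet> (S *v x))"

definition kotz_phi :: "real \<Rightarrow> real \<Rightarrow> real \<Rightarrow> real \<Rightarrow> real \<Rightarrow> real" where
  "kotz_phi d \<alpha> b \<beta> t = t powr (\<alpha> - d / 2) * exp (- ((t / b) powr \<beta>))"

definition kotz_loglik ::
  "real \<Rightarrow> real \<Rightarrow> real \<Rightarrow> nat \<Rightarrow> (nat \<Rightarrow> real^'d) \<Rightarrow> real^'d^'d \<Rightarrow> real" where
  "kotz_loglik \<alpha> b \<beta> n x S =
     - (real n / 2) * ln (det S)
     + (\<Sum>i<n. ln (kotz_phi (real CARD('d)) \<alpha> b \<beta> (x i \<bullet> (matrix_inv S *v x i))))"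

end

theory Submission
  imports Defs
begin

text \<open>
  In terms of the precision matrix \<open>P = S\<inverse>\<close> the log-likelihood becomes
  \<open>g(P) = n/2 log det P + \<Sum>\<^sub>i log \<phi>(x\<^sub>i\<^sup>T P x\<^sub>i)\<close>, a continuous function on the spd cone.
  Put \<open>u\<^sub>i = log x\<^sub>i\<^sup>T P x\<^sub>i\<close> and choose, among the bases formed by sample points, a basis \<open>B\<close>
  minimising the sum of its \<open>u\<^sub>b\<close>. A Hadamard-type inequality bounds \<open>log det P\<close> by this sum up to a
  constant, and by the exchange property every \<open>x\<^sub>i\<close> with \<open>u\<^sub>i \<le> \<tau>\<close> lies in the span of the
  \<open>x\<^sub>b\<close> with \<open>u\<^sub>b \<le> \<tau>\<close>. The subspace condition therefore yields a uniform gap between the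
  two counts below every level \<open>\<tau>\<close>; integrating it over \<open>\<tau> \<in> [m, M]\<close> (\<open>m\<close> the least \<open>u\<^sub>i\<close>,
  \<open>M\<close> the largest \<open>u\<^sub>b\<close>) gives \<open>g(P) \<le> A + c\<^sub>1 M - G (M - m) - \<Sum>\<^sub>i exp (\<beta> (u\<^sub>i - log b))\<close>
  with \<open>G > 0\<close>. As the exponential beats the linear term, on every superlevel set of \<open>g\<close> all
  \<open>u\<^sub>i\<close> stay in a bounded interval; this bounds the entries of \<open>P\<close> and, through \<open>g\<close>, also
  \<open>det P\<close> from below. So the superlevel set lies in a compact set of spd matrices, where \<open>g\<close>
  attains its maximum.
\<close>

section \<open>Positive semidefinite matrices\<close>

definition psd :: "real^'d^'d \<Rightarrow> bool" where
  "psd P \<longleftrightarrow> transpose P = P \<and> (\<forall>v. 0 \<le> v \<bullet> (P *v v))"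

lemma symmetric_form_commute:
  fixes P :: "real^'d^'d"
  assumes "transpose P = P"
  shows "y \<bullet> (P *v z) = z \<bullet> (P *v y)"
proof -
  have "y \<bullet> (P *v z) = (y v* P) \<bullet> z" by (simp add: dot_lmul_matrix)
  also have "y v* P = P *v y"
    using vector_transpose_matrix[of y "transpose P"] assms by simp
  finally show ?thesis by (simp add: inner_commute)
qed

lemma symmetric_form_add_scaleR:
  fixes P :: "real^'d^'d"
  assumes "transpose P = P"
  shows "(y + s *\<^sub>R z) \<bullet> (P *v (y + s *\<^sub>R z)) =
     y \<bullet> (P *v y) + 2 * s * (y \<bullet> (P *v z)) + s\<^sup>2 * (z \<bullet> (P *v z))"
  using symmetric_form_commute[OF assms, of z y]
  by (simp add: algebra_simps power2_eq_square)

lemma psd_form_Cauchy_Schwarz: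
  assumes "psd P"
  shows "(y \<bullet> (P *v z))\<^sup>2 \<le> (y \<bullet> (P *v y)) * (z \<bullet> (P *v z))"
proof -
  define a c bb where "a = y \<bullet> (P *v y)" and "c = z \<bullet> (P *v z)" and "bb = y \<bullet> (P *v z)"
  have nonneg: "0 \<le> a + 2 * s * bb + s\<^sup>2 * c" for s
  proof -
    have "0 \<le> (y + s *\<^sub>R z) \<bullet> (P *v (y + s *\<^sub>R z))" using assms unfolding psd_def by blast
    also have "\<dots> = a + 2 * s * bb + s\<^sup>2 * c"
      unfolding a_def bb_def c_def using assms unfolding psd_def by (blast intro: symmetric_form_add_scaleR)
    finally show ?thesis .
  qed
  show ?thesis
  proof (cases "c = 0")
    case True
    \<comment> \<open>the quadratic is affine in s, so its slope must vanish\<close>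
    have "bb = 0"
    proof (rule ccontr)
      assume "bb \<noteq> 0"
      have "0 \<le> a + 2 * (-(a+1)/(2*bb)) * bb" using nonneg[of "-(a+1)/(2*bb)"] True by simp
      also have "\<dots> = -1" using \<open>bb \<noteq> 0\<close> by (simp add: field_simps)
      finally show False by simp
    qed
    then show ?thesis using True by (simp add: a_def bb_def c_def)
  next
    case False
    then have "c > 0" using assms by (simp add: psd_def c_def order_less_le)
    have "0 \<le> a + 2 * (-bb/c) * bb + (-bb/c)\<^sup>2 * c" by (rule nonneg)
    also have "\<dots> = a - bb\<^sup>2 / c" using \<open>c > 0\<close> by (simp add: field_simps power2_eq_square)
    finally show ?thesis using \<open>c > 0\<close> by (simp add: a_def bb_def c_def divide_le_eq mult.commute)
  qed
qed

lemma psd_form_eq_0_imp_kernel: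
  assumes "psd P" and "v \<bullet> (P *v v) = 0"
  shows "P *v v = 0"
  using psd_form_Cauchy_Schwarz[OF assms(1), of "P *v v" v] assms(2) by simp

lemma psd_abs_form_le:
  assumes "psd P" and "v \<bullet> (P *v v) \<le> T" and "w \<bullet> (P *v w) \<le> T"
  shows "\<bar>v \<bullet> (P *v w)\<bar> \<le> T"
proof -
  have "0 \<le> v \<bullet> (P *v v)" using assms(1) by (simp add: psd_def)
  then have T: "0 \<le> T" using assms(2) by linarith
  have "(v \<bullet> (P *v w))\<^sup>2 \<le> (v \<bullet> (P *v v)) * (w \<bullet> (P *v w))"
    by (rule psd_form_Cauchy_Schwarz[OF assms(1)])
  also have "\<dots> \<le> T\<^sup>2" using assms T unfolding psd_def power2_eq_square by (intro mult_mono) auto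
  finally show ?thesis using T by (simp add: power2_le_iff_abs_le)
qed

lemma form_sum_scaleR:
  fixes P :: "real^'d^'d"
  shows "(\<Sum>v\<in>X. a v *\<^sub>R v) \<bullet> (P *v (\<Sum>w\<in>X. a w *\<^sub>R w))
       = (\<Sum>v\<in>X. \<Sum>w\<in>X. a v * a w * (v \<bullet> (P *v w)))"
proof -
  have "(\<Sum>v\<in>X. a v *\<^sub>R v) \<bullet> (P *v (\<Sum>w\<in>X. a w *\<^sub>R w))
      = (\<Sum>w\<in>X. \<Sum>v\<in>X. a w * (a v * (v \<bullet> (P *v w))))"
    by (simp add: vec.sum matrix_vector_mult_scaleR inner_sum_left inner_sum_right sum_distrib_left)
  also have "\<dots> = (\<Sum>v\<in>X. \<Sum>w\<in>X. a v * a w * (v \<bullet> (P *v w)))"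
    by (subst sum.swap) (simp only: mult_ac)
  finally show ?thesis .
qed

lemma spd_imp_psd:
  assumes "spd P" shows "psd P"
  unfolding psd_def
proof (intro conjI allI)
  show "transpose P = P" using assms by (simp add: spd_def)
  show "0 \<le> v \<bullet> (P *v v)" for v
    using assms unfolding spd_def by (cases "v = 0") (auto intro: less_imp_le)
qed

lemma psd_invertible_imp_spd:
  fixes P :: "real^'d^'d"
  assumes "psd P" and "invertible P"
  shows "spd P"
  unfolding spd_def
proof (intro conjI allI impI)
  show "transpose P = P" using assms(1) by (simp add: psd_def)
  fix v :: "real^'d" assume "v \<noteq> 0"
  have "P *v v \<noteq> P *v 0"
    using inj_matrix_vector_mult[OF assms(2)] \<open>v \<noteq> 0\<close> by (metis injD)
  then have "v \<bullet> (P *v v) \<noteq> 0" using psd_form_eq_0_imp_kernel[OF assms(1)] by auto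
  then show "0 < v \<bullet> (P *v v)" using assms(1) by (simp add: psd_def order_less_le)
qed

lemma spd_invertible:
  fixes P :: "real^'d^'d"
  assumes "spd P" shows "invertible P"
proof -
  have "v = 0" if "P *v v = 0" for v
    using assms that unfolding spd_def by (metis inner_zero_right order_less_irrefl)
  then show ?thesis using matrix_left_invertible_ker invertible_left_inverse by blast
qed

lemma continuous_on_det: "continuous_on S (det :: real^'d^'d \<Rightarrow> real)"
  unfolding det_def[abs_def]
  by (intro continuous_intros continuous_on_component continuous_on_id)

lemma spd_det_pos:
  fixes P :: "real^'d^'d"
  assumes "spd P" shows "det P > 0"
proof -
  define h where "h s = det (s *\<^sub>R P + (1 - s) *\<^sub>R mat 1)" for s :: real
  \<comment> \<open>the segment from the identity to P stays inside the spd cone, where det never vanishes\<close>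
  have "h s \<noteq> 0" if "0 \<le> s" "s \<le> 1" for s
  proof -
    have "spd (s *\<^sub>R P + (1 - s) *\<^sub>R mat 1)"
      unfolding spd_def
    proof (intro conjI allI impI)
      show "transpose (s *\<^sub>R P + (1 - s) *\<^sub>R mat 1) = s *\<^sub>R P + (1 - s) *\<^sub>R mat 1"
        using assms by (simp add: spd_def transpose_def vec_eq_iff mat_def)
      fix v :: "real^'d" assume "v \<noteq> 0"
      have "0 < s * (v \<bullet> (P *v v)) + (1 - s) * (v \<bullet> v)"
        using assms \<open>v \<noteq> 0\<close> that unfolding spd_def
        by (cases "s = 0") (auto intro!: add_pos_nonneg)
      then show "0 < v \<bullet> ((s *\<^sub>R P + (1 - s) *\<^sub>R mat 1) *v v)"
        by (simp add: matrix_vector_mult_add_rdistrib matrix_scaleR_vector_ac[symmetric]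
            matrix_vector_mult_scaleR inner_add_right)
    qed
    then have "invertible (s *\<^sub>R P + (1 - s) *\<^sub>R mat 1)" by (rule spd_invertible)
    then show ?thesis unfolding h_def by (simp add: invertible_det_nz)
  qed
  moreover have "continuous_on {0..1} h"
    unfolding h_def by (rule continuous_on_compose2[OF continuous_on_det]) (auto intro!: continuous_intros)
  moreover have "h 0 = 1" "h 1 = det P" by (simp_all add: h_def)
  ultimately show ?thesis
    using IVT2'[of h 1 0 0] by (metis not_less zero_le_one)
qed

lemma matrix_inv_mult:
  fixes A :: "'a::field^'n^'n"
  assumes "invertible A"
  shows "A ** matrix_inv A = mat 1" and "matrix_inv A ** A = mat 1"
  using someI_ex[OF assms[unfolded invertible_def]] unfolding matrix_inv_def by auto

lemma left_inverse_eq_matrix_inv: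
  fixes A :: "'a::field^'n^'n"
  assumes "invertible A" and "B ** A = mat 1"
  shows "B = matrix_inv A"
proof -
  have "B = B ** (A ** matrix_inv A)" by (simp add: matrix_inv_mult assms(1))
  also have "\<dots> = (B ** A) ** matrix_inv A" by (simp add: matrix_mul_assoc)
  finally show ?thesis by (simp add: assms(2))
qed

lemma matrix_inv_matrix_inv:
  fixes A :: "'a::field^'n^'n"
  assumes "invertible A"
  shows "matrix_inv (matrix_inv A) = A"
proof -
  have "invertible (matrix_inv A)" using matrix_inv_mult[OF assms] invertible_def by blast
  then show ?thesis using left_inverse_eq_matrix_inv matrix_inv_mult(1)[OF assms] by metis
qed

lemma det_matrix_inv:
  fixes A :: "'a::field^'n^'n"
  assumes "invertible A"
  shows "det (matrix_inv A) = inverse (det A)"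
  using det_mul[of A "matrix_inv A"] matrix_inv_mult[OF assms] invertible_det_nz[of A] assms
  by (simp add: field_simps)

lemma spd_matrix_inv:
  assumes "spd S" shows "spd (matrix_inv S)"
proof -
  define Q where "Q = matrix_inv S"
  have S: "transpose S = S" "invertible S" using assms spd_invertible by (auto simp: spd_def)
  have "transpose Q ** S = mat 1"
    using arg_cong[OF matrix_inv_mult(1)[OF S(2)], of transpose]
    by (simp add: matrix_transpose_mul S Q_def)
  then have "transpose Q = Q" unfolding Q_def by (rule left_inverse_eq_matrix_inv[OF S(2)])
  moreover have "0 < v \<bullet> (Q *v v)" if "v \<noteq> 0" for v
  proof -
    define w where "w = Q *v v"
    have "v = S *v w" using matrix_inv_mult(1)[OF S(2)] by (simp add: w_def Q_def matrix_vector_mul_assoc)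
    have "w \<noteq> 0" using \<open>v = S *v w\<close> that by auto
    then have "0 < w \<bullet> (S *v w)" using assms by (simp add: spd_def)
    also have "w \<bullet> (S *v w) = v \<bullet> (Q *v v)"
      using \<open>v = S *v w\<close> by (simp add: w_def inner_commute)
    finally show ?thesis .
  qed
  ultimately show ?thesis unfolding spd_def Q_def by auto
qed

lemma det_le_fact_prod_diag:
  fixes G :: "real^'d^'d"
  assumes nonneg: "\<And>i. 0 \<le> G$i$i" and cs: "\<And>i j. (G$i$j)\<^sup>2 \<le> G$i$i * G$j$j"
  shows "det G \<le> fact CARD('d) * (\<Prod>i\<in>UNIV. G$i$i)"
proof -
  have term_le: "of_int (sign p) * (\<Prod>i\<in>UNIV. G$i$p i) \<le> (\<Prod>i\<in>UNIV. G$i$i)"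
    if p: "p permutes (UNIV::'d set)" for p
  proof -
    have "of_int (sign p) * (\<Prod>i\<in>UNIV. G$i$p i) \<le> (\<Prod>i\<in>UNIV. \<bar>G$i$p i\<bar>)"
      by (simp add: sign_def abs_prod[symmetric] abs_ge_self abs_ge_minus_self)
    also have "\<dots> \<le> (\<Prod>i\<in>UNIV. sqrt (G$i$i) * sqrt (G$p i$p i))"
    proof (rule prod_mono)
      fix i
      have "\<bar>G$i$p i\<bar> \<le> sqrt (G$i$i * G$p i$p i)" using cs[of i "p i"] by (intro real_le_rsqrt) simp
      then show "0 \<le> \<bar>G$i$p i\<bar> \<and> \<bar>G$i$p i\<bar> \<le> sqrt (G$i$i) * sqrt (G$p i$p i)"
        by (simp add: real_sqrt_mult)
    qed
    also have "\<dots> = (\<Prod>i\<in>UNIV. sqrt (G$i$i)) * (\<Prod>i\<in>UNIV. sqrt (G$p i$p i))"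
      by (simp add: prod.distrib)
    also have "(\<Prod>i\<in>UNIV. sqrt (G$p i$p i)) = (\<Prod>i\<in>UNIV. sqrt (G$i$i))"
      using prod.permute[OF p, of "\<lambda>i. sqrt (G$i$i)"] by (simp add: o_def)
    also have "(\<Prod>i\<in>UNIV. sqrt (G$i$i)) * (\<Prod>i\<in>UNIV. sqrt (G$i$i)) = (\<Prod>i\<in>UNIV. G$i$i)"
      by (simp add: prod.distrib[symmetric] nonneg)
    finally show ?thesis .
  qed
  have "det G = (\<Sum>p | p permutes (UNIV::'d set). of_int (sign p) * (\<Prod>i\<in>UNIV. G$i$p i))"
    by (simp add: det_def)
  also have "\<dots> \<le> (\<Sum>p | p permutes (UNIV::'d set). (\<Prod>i\<in>UNIV. G$i$i))"
    by (rule sum_mono) (use term_le in auto)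
  also have "\<dots> = fact CARD('d) * (\<Prod>i\<in>UNIV. G$i$i)"
    by (simp add: card_permutations)
  finally show ?thesis .
qed

lemma gram_det_le_fact_prod_forms:
  fixes P :: "real^'d^'d" and w :: "'d \<Rightarrow> real^'d"
  assumes "psd P"
  shows "det P * (det (\<chi> i j. w j $ i))\<^sup>2 \<le> fact CARD('d) * (\<Prod>j\<in>UNIV. w j \<bullet> (P *v w j))"
proof -
  define Y where "Y = ((\<chi> i j. w j $ i) :: real^'d^'d)"
  define G where "G = transpose Y ** P ** Y"
  have G: "G $ j $ l = w j \<bullet> (P *v w l)" for j l
    unfolding G_def Y_def
    by (simp add: matrix_matrix_mult_def matrix_vector_mult_def inner_vec_def transpose_def
        sum_distrib_left sum_distrib_right mult.assoc mult.left_commute) (rule sum.swap)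
  have "det P * (det Y)\<^sup>2 = det G"
    by (simp add: G_def det_mul det_transpose power2_eq_square algebra_simps)
  also have "\<dots> \<le> fact CARD('d) * (\<Prod>i\<in>UNIV. G$i$i)"
    using assms by (intro det_le_fact_prod_diag) (auto simp: G psd_def psd_form_Cauchy_Schwarz)
  finally show ?thesis by (simp add: G Y_def)
qed

lemma det_columns_nonzero:
  fixes w :: "'d \<Rightarrow> real^'d"
  assumes "inj w" and "independent (range w)"
  shows "det (\<chi> i j. w j $ i) \<noteq> 0"
proof -
  define Y where "Y = ((\<chi> i j. w j $ i) :: real^'d^'d)"
  have "c = 0" if "Y *v c = 0" for c
  proof -
    have "(\<Sum>j\<in>UNIV. c $ j *\<^sub>R w j) = 0"
      using that by (simp add: Y_def matrix_vector_mult_def vec_eq_iff sum_component mult.commute)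
    then have "(\<Sum>v\<in>range w. c $ inv w v *\<^sub>R v) = 0"
      using assms(1) by (simp add: sum.reindex)
    then have "\<forall>v\<in>range w. c $ inv w v = 0"
      using assms(2) dependent_finite[of "range w"] by auto
    then show "c = 0" by (simp add: vec_eq_iff inv_f_f[OF assms(1)])
  qed
  then have "invertible Y" using matrix_left_invertible_ker invertible_left_inverse by blast
  then show ?thesis by (simp add: Y_def invertible_det_nz)
qed

lemma det_le_prod_forms_of_basis:
  fixes x :: "'i \<Rightarrow> real^'d"
  assumes "finite B" and "card B = CARD('d)" and "inj_on x B" and "independent (x ` B)"
  obtains c where "c > 0" and "\<And>P. psd P \<Longrightarrow> c * det P \<le> (\<Prod>b\<in>B. x b \<bullet> (P *v x b))"
proof -
  have "\<exists>e. bij_betw e (UNIV::'d set) B" using assms(1,2) by (intro finite_same_card_bij) auto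
  then obtain e where e: "bij_betw e (UNIV::'d set) B" by blast
  define Y where "Y = ((\<chi> i j. x (e j) $ i) :: real^'d^'d)"
  have "inj (x \<circ> e)" using e assms(3) by (simp add: bij_betw_def comp_inj_on)
  moreover have "range (x \<circ> e) = x ` B" using e unfolding bij_betw_def by (metis image_comp)
  ultimately have "det Y \<noteq> 0" unfolding Y_def using assms(4) det_columns_nonzero[of "x \<circ> e"] by simp
  show ?thesis
  proof
    show "(det Y)\<^sup>2 / fact CARD('d) > 0" using \<open>det Y \<noteq> 0\<close> by simp
    fix P :: "real^'d^'d" assume "psd P"
    have "det P * (det Y)\<^sup>2 \<le> fact CARD('d) * (\<Prod>j\<in>UNIV. x (e j) \<bullet> (P *v x (e j)))"
      unfolding Y_def by (rule gram_det_le_fact_prod_forms[OF \<open>psd P\<close>])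
    also have "(\<Prod>j\<in>UNIV. x (e j) \<bullet> (P *v x (e j))) = (\<Prod>b\<in>B. x b \<bullet> (P *v x b))"
      by (rule prod.reindex_bij_betw[OF e])
    finally show "(det Y)\<^sup>2 / fact CARD('d) * det P \<le> (\<Prod>b\<in>B. x b \<bullet> (P *v x b))"
      by (simp add: field_simps)
  qed
qed

lemma psd_form_sum_le:
  fixes P :: "real^'d^'d"
  assumes "psd P" and "\<And>w. w \<in> X \<Longrightarrow> w \<bullet> (P *v w) \<le> T" and "0 \<le> T"
  shows "(\<Sum>v\<in>X. a v *\<^sub>R v) \<bullet> (P *v (\<Sum>w\<in>X. a w *\<^sub>R w)) \<le> (\<Sum>v\<in>X. \<bar>a v\<bar>)\<^sup>2 * T"
proof -
  have "(\<Sum>v\<in>X. a v *\<^sub>R v) \<bullet> (P *v (\<Sum>w\<in>X. a w *\<^sub>R w))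
      = (\<Sum>v\<in>X. \<Sum>w\<in>X. a v * a w * (v \<bullet> (P *v w)))"
    by (rule form_sum_scaleR)
  also have "\<dots> \<le> (\<Sum>v\<in>X. \<Sum>w\<in>X. \<bar>a v\<bar> * \<bar>a w\<bar> * T)"
  proof (intro sum_mono)
    fix v w assume "v \<in> X" "w \<in> X"
    then have "\<bar>v \<bullet> (P *v w)\<bar> \<le> T" using assms by (intro psd_abs_form_le) auto
    have "a v * a w * (v \<bullet> (P *v w)) \<le> \<bar>a v * a w\<bar> * \<bar>v \<bullet> (P *v w)\<bar>"
      by (simp add: abs_mult[symmetric])
    also have "\<dots> \<le> \<bar>a v * a w\<bar> * T" using \<open>\<bar>v \<bullet> (P *v w)\<bar> \<le> T\<close> by (intro mult_left_mono) auto
    finally show "a v * a w * (v \<bullet> (P *v w)) \<le> \<bar>a v\<bar> * \<bar>a w\<bar> * T" by (simp add: abs_mult)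
  qed
  also have "\<dots> = (\<Sum>v\<in>X. \<bar>a v\<bar>)\<^sup>2 * T"
  proof -
    have "(\<Sum>v\<in>X. \<bar>a v\<bar>)\<^sup>2 * T = (\<Sum>v\<in>X. \<Sum>w\<in>X. \<bar>a v\<bar> * \<bar>a w\<bar>) * T"
      by (simp only: power2_eq_square sum_product)
    then show ?thesis by (simp only: sum_distrib_right)
  qed
  finally show ?thesis .
qed

lemma psd_entries_bounded:
  fixes X :: "(real^'d) set"
  assumes "finite X" and "span X = UNIV"
  obtains K where "\<And>P T j l. psd P \<Longrightarrow> (\<forall>v\<in>X. v \<bullet> (P *v v) \<le> T) \<Longrightarrow> \<bar>P$j$l\<bar> \<le> K * T"
proof -
  have axis: "axis j (1::real) \<in> span X" for j :: 'd using assms(2) by simp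
  then have "\<exists>a. axis j 1 = (\<Sum>v\<in>X. a v *\<^sub>R v)" for j :: 'd
    using span_finite[OF assms(1)] by auto
  then obtain a where a: "\<And>j. axis j 1 = (\<Sum>v\<in>X. a j v *\<^sub>R v)" by metis
  define K where "K = (\<Sum>j\<in>UNIV. (\<Sum>v\<in>X. \<bar>a j v\<bar>)\<^sup>2)"
  show ?thesis
  proof
    fix P :: "real^'d^'d" and T and j l :: 'd
    assume "psd P" and XT: "\<forall>v\<in>X. v \<bullet> (P *v v) \<le> T"
    obtain w where "w \<in> X"
    proof (cases "X = {}")
      case True
      then have "axis j (1::real) = 0" using axis[of j] by simp
      then show ?thesis by (metis axis_nth zero_index zero_neq_one)
    qed blast
    then have "0 \<le> T" using XT \<open>psd P\<close> unfolding psd_def by (metis order_trans)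
    have "axis k 1 \<bullet> (P *v axis k 1) \<le> K * T" for k
    proof -
      have "axis k 1 \<bullet> (P *v axis k 1) \<le> (\<Sum>v\<in>X. \<bar>a k v\<bar>)\<^sup>2 * T"
        unfolding a[of k] using \<open>psd P\<close> XT \<open>0 \<le> T\<close> by (intro psd_form_sum_le) auto
      also have "\<dots> \<le> K * T"
        unfolding K_def using \<open>0 \<le> T\<close>
        by (intro mult_right_mono member_le_sum) auto
      finally show ?thesis .
    qed
    then have "\<bar>axis j 1 \<bullet> (P *v axis l 1)\<bar> \<le> K * T"
      by (intro psd_abs_form_le[OF \<open>psd P\<close>])
    then show "\<bar>P$j$l\<bar> \<le> K * T"
      by (simp add: inner_axis' matrix_vector_mult_basis column_def)
  qed
qed

lemma continuous_on_quadratic_form: "continuous_on S (\<lambda>P::real^'d^'d. v \<bullet> (P *v v))"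
  unfolding inner_vec_def matrix_vector_mult_def
  by (intro continuous_intros continuous_on_component continuous_on_id)

lemma compact_psd_box:
  "compact {P::real^'d^'d. psd P \<and> (\<forall>i j. \<bar>P$i$j\<bar> \<le> R) \<and> \<delta> \<le> det P}"
proof -
  define K where "K = {P::real^'d^'d. psd P \<and> (\<forall>i j. \<bar>P$i$j\<bar> \<le> R) \<and> \<delta> \<le> det P}"
  have "K = {P. (\<forall>i j. P$i$j = P$j$i) \<and> (\<forall>v. 0 \<le> v \<bullet> (P *v v))
      \<and> (\<forall>i j. \<bar>P$i$j\<bar> \<le> R) \<and> \<delta> \<le> det P}"
    by (auto simp: K_def psd_def vec_eq_iff transpose_def)
  then have "closed K"
    by (simp only:) (intro closed_Collect_conj closed_Collect_all closed_Collect_eq closed_Collect_le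
        continuous_on_quadratic_form continuous_on_component continuous_on_id continuous_on_det continuous_intros)
  moreover have "bounded K"
  proof -
    have "norm P \<le> real CARD('d) * (real CARD('d) * R)" if "P \<in> K" for P
    proof -
      have "norm P \<le> (\<Sum>i\<in>UNIV. norm (P $ i))" unfolding norm_vec_def by (rule L2_set_le_sum) auto
      also have "\<dots> \<le> (\<Sum>i\<in>(UNIV::'d set). real CARD('d) * R)"
      proof (rule sum_mono)
        fix i
        have "norm (P $ i) \<le> (\<Sum>j\<in>UNIV. \<bar>P$i$j\<bar>)" by (rule norm_le_l1_cart)
        also have "\<dots> \<le> (\<Sum>j\<in>(UNIV::'d set). R)" using that by (intro sum_mono) (auto simp: K_def)
        finally show "norm (P $ i) \<le> real CARD('d) * R" by simp
      qed
      finally show ?thesis by simp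
    qed
    then show ?thesis unfolding bounded_iff by blast
  qed
  ultimately show ?thesis unfolding K_def by (simp add: compact_eq_bounded_closed)
qed

lemma continuous_attains_sup_superlevel:
  fixes f :: "'a::topological_space \<Rightarrow> 'b::linorder_topology"
  assumes "compact K" and "K \<subseteq> A" and "continuous_on K f" and "a \<in> K"
    and superlevel: "\<And>y. y \<in> A \<Longrightarrow> f a \<le> f y \<Longrightarrow> y \<in> K"
  shows "\<exists>z\<in>A. \<forall>y\<in>A. f y \<le> f z"
proof -
  obtain z where "z \<in> K" and max: "\<And>y. y \<in> K \<Longrightarrow> f y \<le> f z"
    using continuous_attains_sup[OF assms(1) _ assms(3)] assms(4) by blast
  have "f y \<le> f z" if "y \<in> A" for y
    using max[OF superlevel[OF that]] max[OF assms(4)] by (cases "f a \<le> f y") auto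
  then show ?thesis using \<open>z \<in> K\<close> assms(2) by blast
qed

section \<open>Bases among the sample vectors\<close>

definition basis_indices :: "('i \<Rightarrow> real^'d) \<Rightarrow> 'i set \<Rightarrow> 'i set set" where
  "basis_indices x N = {B. B \<subseteq> N \<and> card B = CARD('d) \<and> inj_on x B \<and> independent (x ` B)}"

lemma finite_basis_indices: "finite N \<Longrightarrow> finite (basis_indices x N)"
  unfolding basis_indices_def by (rule finite_subset[of _ "Pow N"]) auto

lemma basis_indices_finite: "B \<in> basis_indices x N \<Longrightarrow> finite B"
  unfolding basis_indices_def by (auto intro: card_ge_0_finite)

lemma span_basis_indices:
  fixes x :: "'i \<Rightarrow> real^'d"
  assumes "B \<in> basis_indices x N" shows "span (x ` B) = UNIV"
proof -
  have "card (x ` B) = CARD('d)" using assms unfolding basis_indices_def by (auto simp: card_image)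
  then show ?thesis using assms card_ge_dim_independent[of "x ` B" UNIV]
    unfolding basis_indices_def by auto
qed

lemma spanning_imp_basis_indices:
  fixes x :: "'i \<Rightarrow> real^'d"
  assumes "B \<subseteq> N" and "finite B" and "card B = CARD('d)" and "span (x ` B) = UNIV"
  shows "B \<in> basis_indices x N"
proof -
  have "CARD('d) \<le> card (x ` B)" using span_card_ge_dim[of "x ` B" UNIV] assms(2,4) by simp
  then have "card (x ` B) = card B" using card_image_le[OF assms(2), of x] assms(3) by simp
  then have "inj_on x B" by (rule eq_card_imp_inj_on[OF assms(2)])
  moreover have "independent (x ` B)"
    using assms card_image_le[OF assms(2), of x] by (intro card_le_dim_spanning[of _ UNIV]) auto
  ultimately show ?thesis using assms by (simp add: basis_indices_def)
qed

lemma basis_indices_nonempty: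
  fixes x :: "'i \<Rightarrow> real^'d"
  assumes "span (x ` N) = UNIV"
  shows "basis_indices x N \<noteq> {}"
proof -
  obtain T where T: "T \<subseteq> x ` N" "independent T" "x ` N \<subseteq> span T"
    by (rule maximal_independent_subset)
  then have "span T = UNIV" using span_mono[OF T(3)] assms by (auto simp: span_span)
  then have "card T = CARD('d)" using dim_span_eq_card_independent[OF T(2)] by simp
  obtain B where "B \<subseteq> N" "inj_on x B" "T = x ` B" using T(1) subset_image_inj by metis
  then have "B \<in> basis_indices x N"
    using T \<open>card T = CARD('d)\<close> by (auto simp: basis_indices_def card_image)
  then show ?thesis by blast
qed

lemma basis_indices_exchange:
  fixes x :: "'i \<Rightarrow> real^'d"
  assumes B: "B \<in> basis_indices x N" and "C \<subseteq> B"
    and "i \<in> N" and "i \<notin> B" and "x i \<notin> span (x ` C)"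
  obtains b where "b \<in> B - C" and "insert i (B - {b}) \<in> basis_indices x N"
proof -
  have "finite B" using B by (rule basis_indices_finite)
  define F where "F = {T. C \<subseteq> T \<and> T \<subseteq> B \<and> x i \<in> span (x ` T)}"
  have "B \<in> F" using span_basis_indices[OF B] assms(2) by (auto simp: F_def)
  then obtain T where "T \<in> F" and T_min: "\<And>T'. T' \<in> F \<Longrightarrow> card T \<le> card T'"
    using ex_has_least_nat[of "\<lambda>T. T \<in> F" B card] by blast
  then have T: "C \<subseteq> T" "T \<subseteq> B" "x i \<in> span (x ` T)" by (auto simp: F_def)
  moreover have "T \<noteq> C" using T(3) assms(5) by auto
  ultimately obtain b where b: "b \<in> T" "b \<notin> C" by blast
  have "finite T" using T(2) \<open>finite B\<close> finite_subset by blast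
  have "T - {b} \<notin> F"
  proof
    assume "T - {b} \<in> F"
    then have "card T \<le> card (T - {b})" by (rule T_min)
    with card_Diff1_less[OF \<open>finite T\<close> b(1)] show False by linarith
  qed
  then have "x i \<notin> span (x ` (T - {b}))" using T(1,2) b(2) unfolding F_def by blast
  moreover have "x i \<in> span (insert (x b) (x ` (T - {b})))"
  proof -
    have "insert (x b) (x ` (T - {b})) = x ` T" using b(1) by auto
    then show ?thesis using T(3) by simp
  qed
  ultimately have xb: "x b \<in> span (insert (x i) (x ` (T - {b})))" using in_span_insert by blast
  define B' where "B' = insert i (B - {b})"
  have "x ` B \<subseteq> span (x ` B')"
  proof
    fix z assume "z \<in> x ` B"
    then obtain c where "c \<in> B" "z = x c" by blast
    show "z \<in> span (x ` B')"
    proof (cases "c = b")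
      case True
      have "insert (x i) (x ` (T - {b})) \<subseteq> x ` B'" using T(2) by (auto simp: B'_def)
      then show ?thesis using xb True \<open>z = x c\<close> span_mono by blast
    next
      case False
      then have "z \<in> x ` B'" using \<open>c \<in> B\<close> \<open>z = x c\<close> by (auto simp: B'_def)
      then show ?thesis by (rule span_base)
    qed
  qed
  then have "span (x ` B) \<subseteq> span (x ` B')" by (rule span_minimal) (rule subspace_span)
  then have span': "span (x ` B') = UNIV" using span_basis_indices[OF B] by auto
  have "b \<in> B" using b(1) T(2) by blast
  have "card B' = Suc (card B - 1)"
    using \<open>finite B\<close> assms(4) \<open>b \<in> B\<close> by (simp add: B'_def)
  also have "\<dots> = CARD('d)"
    using B \<open>b \<in> B\<close> unfolding basis_indices_def by (simp add: Suc_diff_1)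
  finally have "B' \<in> basis_indices x N"
    using span' B assms(3) \<open>finite B\<close>
    by (intro spanning_imp_basis_indices) (auto simp: B'_def basis_indices_def)
  moreover have "b \<in> B - C" using \<open>b \<in> B\<close> b(2) by blast
  ultimately show ?thesis using that unfolding B'_def by blast
qed

lemma min_weight_basis_span:
  fixes x :: "'i \<Rightarrow> real^'d" and u :: "'i \<Rightarrow> real"
  assumes B: "B \<in> basis_indices x N" and min: "\<And>B'. B' \<in> basis_indices x N \<Longrightarrow> sum u B \<le> sum u B'"
    and "i \<in> N" and "u i \<le> \<tau>"
  shows "x i \<in> span (x ` {b\<in>B. u b \<le> \<tau>})"
proof (rule ccontr)
  assume out: "x i \<notin> span (x ` {b\<in>B. u b \<le> \<tau>})"
  have "i \<notin> B"
  proof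
    assume "i \<in> B"
    then have "x i \<in> x ` {b\<in>B. u b \<le> \<tau>}" using assms(4) by blast
    then have "x i \<in> span (x ` {b\<in>B. u b \<le> \<tau>})" by (rule span_base)
    with out show False by contradiction
  qed
  have "{b\<in>B. u b \<le> \<tau>} \<subseteq> B" by blast
  then obtain b where "b \<in> B - {b\<in>B. u b \<le> \<tau>}" and B': "insert i (B - {b}) \<in> basis_indices x N"
    using basis_indices_exchange[OF B _ assms(3) \<open>i \<notin> B\<close> out] by blast
  then have b: "b \<in> B" "\<tau> < u b" by auto
  have "finite B" using B by (rule basis_indices_finite)
  have "sum u (insert i (B - {b})) = u i + (sum u B - u b)"
    using \<open>finite B\<close> \<open>i \<notin> B\<close> b(1) by (simp add: sum_diff1)
  then show False using min[OF B'] b(2) assms(4) by simp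
qed

section \<open>Real-variable estimates\<close>

lemma nonneg_if_mono_between_breakpoints:
  fixes f :: "real \<Rightarrow> real"
  assumes "finite V" and "m \<in> V" and "0 \<le> f m"
    and step: "\<And>s t. s \<in> V \<Longrightarrow> m \<le> s \<Longrightarrow> s < t \<Longrightarrow> t \<le> M \<Longrightarrow>
      (\<forall>v\<in>V. v \<le> s \<or> t \<le> v) \<Longrightarrow> f s \<le> f t"
    and "m \<le> t" and "t \<le> M"
  shows "0 \<le> f t"
  using assms(5,6)
proof (induction "card {v\<in>V. v < t}" arbitrary: t rule: less_induct)
  case less
  show ?case
  proof (cases "t = m")
    case True
    then show ?thesis using assms(3) by simp
  next
    case False
    define W where "W = {v\<in>V. v < t}"
    have W: "finite W" "m \<in> W" using assms(1,2) less.prems False by (auto simp: W_def)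
    define s where "s = Max W"
    have "s \<in> W" using W unfolding s_def by (intro Max_in) auto
    then have "s \<in> V" "s < t" by (auto simp: W_def)
    have "m \<le> s" using W by (simp add: s_def)
    have gap: "\<forall>v\<in>V. v \<le> s \<or> t \<le> v" using W by (auto simp: s_def W_def not_less)
    have "{v\<in>V. v < s} \<subset> W" using \<open>s \<in> W\<close> by (auto simp: W_def)
    then have "card {v\<in>V. v < s} < card W" by (rule psubset_card_mono[OF W(1)])
    then have "0 \<le> f s"
      using less.hyps \<open>m \<le> s\<close> \<open>s < t\<close> less.prems by (auto simp: W_def)
    also have "f s \<le> f t" using step \<open>s \<in> V\<close> \<open>m \<le> s\<close> \<open>s < t\<close> less.prems gap by blast
    finally show ?thesis .
  qed
qed

lemma sum_min_diff:
  fixes u :: "'i \<Rightarrow> real"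
  assumes "finite A" and "s < t" and gap: "\<And>i. i \<in> A \<Longrightarrow> u i \<le> s \<or> t \<le> u i"
  shows "(\<Sum>i\<in>A. min (u i) t) - (\<Sum>i\<in>A. min (u i) s)
       = (t - s) * (real (card A) - real (card {i\<in>A. u i \<le> s}))"
proof -
  have "(\<Sum>i\<in>A. min (u i) t) - (\<Sum>i\<in>A. min (u i) s) = (\<Sum>i\<in>A. min (u i) t - min (u i) s)"
    by (simp add: sum_subtractf)
  also have "\<dots> = (\<Sum>i\<in>A - {i\<in>A. u i \<le> s}. t - s)"
    using assms by (intro sum.mono_neutral_cong_right) (auto dest: gap)
  also have "\<dots> = (t - s) * real (card A - card {i\<in>A. u i \<le> s})"
    using assms(1) by (simp add: card_Diff_subset)
  finally show ?thesis using assms(1) by (simp add: of_nat_diff card_mono)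
qed

lemma layer_cake_bound:
  fixes u :: "'i \<Rightarrow> real" and p q \<gamma> :: real
  assumes "finite N" and "finite B" and "m \<le> M"
    and "\<forall>i\<in>N. m \<le> u i" and "\<forall>b\<in>B. m \<le> u b \<and> u b \<le> M"
    and slope: "\<And>\<tau>. m \<le> \<tau> \<Longrightarrow> \<tau> < M \<Longrightarrow>
        \<gamma> \<le> p * real (card {b\<in>B. u b \<le> \<tau>}) - q * real (card {i\<in>N. u i \<le> \<tau>})"
  shows "(q * real (card N) - p * real (card B)) * M + \<gamma> * (M - m)
         \<le> q * (\<Sum>i\<in>N. min (u i) M) - p * (\<Sum>b\<in>B. u b)"
proof -
  \<comment> \<open>integrating the slope bound over [m, M]: F is piecewise linear with nonnegative slopes\<close>
  define F where "F \<tau> = q * (\<Sum>i\<in>N. min (u i) \<tau>) - p * (\<Sum>b\<in>B. min (u b) \<tau>)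
      - (q * real (card N) - p * real (card B)) * \<tau> - \<gamma> * (\<tau> - m)" for \<tau>
  define V where "V = insert m (u ` (N \<union> B))"
  have "0 \<le> F M"
  proof (rule nonneg_if_mono_between_breakpoints[of V m F])
    show "finite V" "m \<in> V" using assms(1,2) by (auto simp: V_def)
    have "(\<Sum>i\<in>N. min (u i) m) = (\<Sum>i\<in>N. m)" "(\<Sum>b\<in>B. min (u b) m) = (\<Sum>b\<in>B. m)"
      using assms(4,5) by (auto intro: sum.cong)
    then show "0 \<le> F m" by (simp add: F_def algebra_simps)
    fix s t assume "s \<in> V" "m \<le> s" "s < t" "t \<le> M" and gap: "\<forall>v\<in>V. v \<le> s \<or> t \<le> v"
    have gap': "u i \<le> s \<or> t \<le> u i" if "i \<in> N \<union> B" for i using gap that by (auto simp: V_def)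
    have diffN: "(\<Sum>i\<in>N. min (u i) t) - (\<Sum>i\<in>N. min (u i) s)
        = (t - s) * (real (card N) - real (card {i\<in>N. u i \<le> s}))"
      by (rule sum_min_diff[OF assms(1) \<open>s < t\<close>]) (use gap' in auto)
    have diffB: "(\<Sum>b\<in>B. min (u b) t) - (\<Sum>b\<in>B. min (u b) s)
        = (t - s) * (real (card B) - real (card {b\<in>B. u b \<le> s}))"
      by (rule sum_min_diff[OF assms(2) \<open>s < t\<close>]) (use gap' in auto)
    have "F t - F s = q * ((\<Sum>i\<in>N. min (u i) t) - (\<Sum>i\<in>N. min (u i) s))
        - p * ((\<Sum>b\<in>B. min (u b) t) - (\<Sum>b\<in>B. min (u b) s))
        - (q * real (card N) - p * real (card B)) * (t - s) - \<gamma> * (t - s)"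
      by (simp add: F_def algebra_simps)
    also have "\<dots> = (t - s) * (p * real (card {b\<in>B. u b \<le> s}) - q * real (card {i\<in>N. u i \<le> s}) - \<gamma>)"
      unfolding diffN diffB by (simp add: algebra_simps)
    also have "\<dots> \<ge> 0" using slope \<open>m \<le> s\<close> \<open>s < t\<close> \<open>t \<le> M\<close> by simp
    finally show "F s \<le> F t" by simp
  qed (use assms(3) in auto)
  moreover have "(\<Sum>b\<in>B. min (u b) M) = (\<Sum>b\<in>B. u b)" using assms(5) by (auto intro: sum.cong)
  ultimately show ?thesis by (simp add: F_def)
qed

lemma exp_le_affine_imp_bounded:
  fixes p q :: real
  obtains Y where "\<And>y. exp y \<le> p + q * y \<Longrightarrow> y \<le> Y"
proof
  fix y assume ey: "exp y \<le> p + q * y"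
  show "y \<le> max 1 (2 * (\<bar>p\<bar> + \<bar>q\<bar>))"
  proof (rule ccontr)
    assume "\<not> ?thesis"
    then have y: "y > 1" "y > 2 * (\<bar>p\<bar> + \<bar>q\<bar>)" by auto
    \<comment> \<open>exp y \<ge> y^2/2 outgrows every affine function\<close>
    have "y\<^sup>2 / 2 \<le> p + q * y" using exp_lower_Taylor_quadratic[of y] ey y by simp
    also have "\<dots> \<le> (\<bar>p\<bar> + \<bar>q\<bar>) * y"
    proof -
      have "p \<le> \<bar>p\<bar> * y" using y mult_left_mono[of 1 y "\<bar>p\<bar>"] by linarith
      moreover have "q * y \<le> \<bar>q\<bar> * y" using y by (intro mult_right_mono) auto
      ultimately show ?thesis by (simp add: distrib_right)
    qed
    finally have "y * y \<le> 2 * ((\<bar>p\<bar> + \<bar>q\<bar>) * y)" by (simp add: power2_eq_square)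
    then have "y * y \<le> (2 * (\<bar>p\<bar> + \<bar>q\<bar>)) * y" by (simp only: mult.assoc)
    then show False using y by (simp add: mult_le_cancel_right)
  qed
qed

lemma affine_minus_exp_level_bounds:
  fixes c A c1 G \<beta> s :: real
  assumes "c1 > 0" and "G > 0" and "\<beta> > 0"
  obtains L U where "\<And>M m v. m \<le> M \<Longrightarrow> m \<le> v \<Longrightarrow>
      c \<le> A + c1 * M - G * (M - m) - exp (\<beta> * (M - s)) \<Longrightarrow>
      c \<le> A + c1 * M - G * (M - m) - exp (\<beta> * (v - s)) \<Longrightarrow> L \<le> v \<and> v \<le> U"
proof -
  obtain Y where Y: "\<And>y. exp y \<le> (A - c + c1 * s) + (c1 / \<beta>) * y \<Longrightarrow> y \<le> Y"
    using exp_le_affine_imp_bounded[of "A - c + c1 * s" "c1 / \<beta>"] by blast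
  define Q where "Q = A - c + c1 * (s + Y / \<beta>)"
  show ?thesis
  proof
    fix M m v
    assume "m \<le> M" "m \<le> v"
      and hM: "c \<le> A + c1 * M - G * (M - m) - exp (\<beta> * (M - s))"
      and hv: "c \<le> A + c1 * M - G * (M - m) - exp (\<beta> * (v - s))"
    have GMm: "0 \<le> G * (M - m)" using assms(2) \<open>m \<le> M\<close> by simp
    have "exp (\<beta> * (M - s)) \<le> (A - c + c1 * s) + (c1 / \<beta>) * (\<beta> * (M - s))"
      using hM GMm assms(3) by (simp add: algebra_simps)
    then have "\<beta> * (M - s) \<le> Y" by (rule Y)
    then have "M \<le> s + Y / \<beta>" using assms(3) by (simp add: field_simps)
    then have "c1 * M \<le> c1 * (s + Y / \<beta>)" using assms(1) by simp
    then have bound: "G * (M - m) + exp (\<beta> * (v - s)) \<le> Q" using hv by (simp add: Q_def)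
    have "(c - A) / c1 \<le> M"
      using hM GMm assms(1) by (simp add: divide_le_eq mult.commute) (smt (verit) exp_gt_zero)
    moreover have "M - m \<le> Q / G"
      using bound assms(2) by (simp add: le_divide_eq mult.commute) (smt (verit) exp_gt_zero)
    ultimately have "(c - A) / c1 - Q / G \<le> v" using \<open>m \<le> v\<close> by linarith
    moreover have "exp (\<beta> * (v - s)) \<le> max 1 Q" using bound GMm by linarith
    then have "\<beta> * (v - s) \<le> ln (max 1 Q)" by (simp add: exp_le_cancel_iff ln_ge_iff)
    then have "v \<le> s + ln (max 1 Q) / \<beta>" using assms(3) by (simp add: field_simps)
    ultimately show "(c - A) / c1 - Q / G \<le> v \<and> v \<le> s + ln (max 1 Q) / \<beta>" by simp
  qed
qed

lemma uniform_gap_on_grid: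
  fixes p q :: real and R K :: nat
  obtains \<gamma> where "\<gamma> > 0" and "\<And>r a. r \<le> R \<Longrightarrow> a \<le> K \<Longrightarrow> q * real a < p * real r \<Longrightarrow>
    \<gamma> \<le> p * real r - q * real a"
proof
  define \<Gamma> where "\<Gamma> = {z \<in> (\<lambda>(r, a). p * real r - q * real a) ` ({..R} \<times> {..K}). 0 < z}"
  have "finite \<Gamma>" by (simp add: \<Gamma>_def)
  then show "Min (insert 1 \<Gamma>) > 0" by (subst Min_gr_iff) (auto simp: \<Gamma>_def)
  fix r a assume "r \<le> R" "a \<le> K" "q * real a < p * real r"
  then have "p * real r - q * real a \<in> \<Gamma>" unfolding \<Gamma>_def by force
  then show "Min (insert 1 \<Gamma>) \<le> p * real r - q * real a" using \<open>finite \<Gamma>\<close> by simp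
qed

section \<open>The Kotz likelihood\<close>

lemma ln_det_le_sum_ln_basis_forms:
  fixes x :: "'i \<Rightarrow> real^'d"
  assumes "finite N"
  obtains C where "\<And>B P. B \<in> basis_indices x N \<Longrightarrow> spd P \<Longrightarrow>
    ln (det P) \<le> (\<Sum>b\<in>B. ln (x b \<bullet> (P *v x b))) + C"
proof -
  have "\<exists>C. \<forall>P. spd P \<longrightarrow> ln (det P) \<le> (\<Sum>b\<in>B. ln (x b \<bullet> (P *v x b))) + C"
    if B: "B \<in> basis_indices x N" for B
  proof -
    have "finite B" using B by (rule basis_indices_finite)
    then obtain c where "c > 0" and c: "\<And>P. psd P \<Longrightarrow> c * det P \<le> (\<Prod>b\<in>B. x b \<bullet> (P *v x b))"
      using det_le_prod_forms_of_basis[of B x] B unfolding basis_indices_def by blast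
    have "ln (det P) \<le> (\<Sum>b\<in>B. ln (x b \<bullet> (P *v x b))) - ln c" if "spd P" for P
    proof -
      have "x b \<noteq> 0" if "b \<in> B" for b
        using B that dependent_zero[of "x ` B"] unfolding basis_indices_def by force
      then have pos: "0 < x b \<bullet> (P *v x b)" if "b \<in> B" for b
        using \<open>spd P\<close> that unfolding spd_def by blast
      have "ln c + ln (det P) = ln (c * det P)"
        using \<open>c > 0\<close> spd_det_pos[OF \<open>spd P\<close>] by (simp add: ln_mult)
      also have "\<dots> \<le> ln (\<Prod>b\<in>B. x b \<bullet> (P *v x b))"
        using c[OF spd_imp_psd[OF \<open>spd P\<close>]] \<open>c > 0\<close> spd_det_pos[OF \<open>spd P\<close>] pos
        by (subst ln_le_cancel_iff) (auto intro: prod_pos)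
      also have "\<dots> = (\<Sum>b\<in>B. ln (x b \<bullet> (P *v x b)))"
        using pos by (intro ln_prod[OF \<open>finite B\<close>]) (metis less_irrefl)
      finally show ?thesis by simp
    qed
    then show ?thesis by (intro exI[of _ "- ln c"]) simp
  qed
  then obtain C where C: "\<And>B P. B \<in> basis_indices x N \<Longrightarrow> spd P \<Longrightarrow>
      ln (det P) \<le> (\<Sum>b\<in>B. ln (x b \<bullet> (P *v x b))) + C B"
    by metis
  show ?thesis
  proof (rule that)
    fix B and P :: "real^'d^'d"
    assume "B \<in> basis_indices x N" "spd P"
    then have "ln (det P) \<le> (\<Sum>b\<in>B. ln (x b \<bullet> (P *v x b))) + C B" by (rule C)
    also have "\<dots> \<le> (\<Sum>b\<in>B. ln (x b \<bullet> (P *v x b))) + Max (insert 0 (C ` basis_indices x N))"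
      using \<open>B \<in> basis_indices x N\<close> finite_basis_indices[OF assms, of x]
      by (intro add_left_mono Max_ge) auto
    finally show "ln (det P) \<le> (\<Sum>b\<in>B. ln (x b \<bullet> (P *v x b))) + Max (insert 0 (C ` basis_indices x N))" .
  qed
qed

definition kotz_precision_loglik ::
  "real \<Rightarrow> real \<Rightarrow> real \<Rightarrow> nat \<Rightarrow> (nat \<Rightarrow> real^'d) \<Rightarrow> real^'d^'d \<Rightarrow> real" where
  "kotz_precision_loglik \<alpha> b \<beta> n x P = real n / 2 * ln (det P)
     + (\<Sum>i<n. ln (kotz_phi (real CARD('d)) \<alpha> b \<beta> (x i \<bullet> (P *v x i))))"

lemma kotz_loglik_eq_precision:
  fixes S :: "real^'d^'d"
  assumes "spd S"
  shows "kotz_loglik \<alpha> b \<beta> n x S = kotz_precision_loglik \<alpha> b \<beta> n x (matrix_inv S)"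
  using det_matrix_inv[OF spd_invertible[OF assms]] spd_det_pos[OF assms]
  by (simp add: kotz_loglik_def kotz_precision_loglik_def ln_inverse)

lemma ln_kotz_phi:
  assumes "t > 0" and "b > 0"
  shows "ln (kotz_phi d \<alpha> b \<beta> t) = (\<alpha> - d / 2) * ln t - exp (\<beta> * (ln t - ln b))"
  using assms by (simp add: kotz_phi_def ln_mult ln_powr powr_def ln_div)

text \<open>Zero sample points contribute nothing, since \<open>0 powr a = 0\<close> and \<open>ln 0 = 0\<close>.\<close>

lemma ln_kotz_phi_0: "ln (kotz_phi d \<alpha> b \<beta> 0) = 0"
  by (simp add: kotz_phi_def)

lemma kotz_precision_loglik_eq:
  fixes P :: "real^'d^'d" and x :: "nat \<Rightarrow> real^'d"
  assumes "spd P" and "b > 0"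
  shows "kotz_precision_loglik \<alpha> b \<beta> n x P = real n / 2 * ln (det P)
     + (\<Sum>i | i < n \<and> x i \<noteq> 0. (\<alpha> - real CARD('d) / 2) * ln (x i \<bullet> (P *v x i))
          - exp (\<beta> * (ln (x i \<bullet> (P *v x i)) - ln b)))"
proof -
  have "(\<Sum>i<n. ln (kotz_phi (real CARD('d)) \<alpha> b \<beta> (x i \<bullet> (P *v x i))))
      = (\<Sum>i | i < n \<and> x i \<noteq> 0. ln (kotz_phi (real CARD('d)) \<alpha> b \<beta> (x i \<bullet> (P *v x i))))"
    by (rule sum.mono_neutral_cong_right) (auto simp: ln_kotz_phi_0)
  also have "\<dots> = (\<Sum>i | i < n \<and> x i \<noteq> 0. (\<alpha> - real CARD('d) / 2) * ln (x i \<bullet> (P *v x i))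
          - exp (\<beta> * (ln (x i \<bullet> (P *v x i)) - ln b)))"
    using assms unfolding spd_def by (intro sum.cong refl ln_kotz_phi) auto
  finally show ?thesis by (simp add: kotz_precision_loglik_def)
qed

lemma continuous_on_kotz_precision_loglik:
  fixes x :: "nat \<Rightarrow> real^'d"
  assumes "b > 0"
  shows "continuous_on {P. spd P} (kotz_precision_loglik \<alpha> b \<beta> n x)"
proof -
  have pos: "0 < x i \<bullet> (P *v x i)" if "spd P" "x i \<noteq> 0" for P i
    using that by (simp add: spd_def)
  have "continuous_on {P. spd P} (\<lambda>P. real n / 2 * ln (det P)
     + (\<Sum>i | i < n \<and> x i \<noteq> 0. (\<alpha> - real CARD('d) / 2) * ln (x i \<bullet> (P *v x i))
          - exp (\<beta> * (ln (x i \<bullet> (P *v x i)) - ln b))))"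
    using spd_det_pos pos
    by (intro continuous_intros continuous_on_det continuous_on_quadratic_form) (auto dest: less_imp_neq[symmetric])
  then show ?thesis
    by (rule continuous_on_eq) (simp add: kotz_precision_loglik_eq assms)
qed

locale kotz_sample =
  fixes \<alpha> b \<beta> :: real and n :: nat and x :: "nat \<Rightarrow> real^'d"
  assumes \<alpha>_pos: "\<alpha> > 0" and b_pos: "b > 0" and \<beta>_pos: "\<beta> > 0"
    and \<alpha>_less: "\<alpha> < real CARD('d) / 2"
    and span_sample: "span (x ` {..<n}) = UNIV"
    and subspace_fraction: "\<And>L :: (real^'d) set. subspace L \<Longrightarrow> 1 \<le> dim L \<Longrightarrow> dim L < CARD('d) \<Longrightarrow>
           real (card {i. i < n \<and> x i \<in> L}) / real n < real (dim L) / (real CARD('d) - 2 * \<alpha>)"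
begin

definition nonzero_samples :: "nat set" where
  "nonzero_samples = {i. i < n \<and> x i \<noteq> 0}"

abbreviation loglik :: "real^'d^'d \<Rightarrow> real" where
  "loglik \<equiv> kotz_precision_loglik \<alpha> b \<beta> n x"

lemma finite_nonzero_samples: "finite nonzero_samples"
  by (simp add: nonzero_samples_def)

lemma card_nonzero_samples_le: "card nonzero_samples \<le> n"
  using card_mono[of "{..<n}" nonzero_samples] by (auto simp: nonzero_samples_def)

lemma span_nonzero_samples: "span (x ` nonzero_samples) = UNIV"
proof -
  have "x ` {..<n} \<subseteq> insert 0 (x ` nonzero_samples)" by (auto simp: nonzero_samples_def)
  then have "span (x ` {..<n}) \<subseteq> span (insert 0 (x ` nonzero_samples))" by (rule span_mono)
  then have "UNIV \<subseteq> span (x ` nonzero_samples)" using span_sample by (simp add: span_insert_0)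
  then show ?thesis by blast
qed

lemma n_pos: "0 < n"
proof (rule ccontr)
  have "axis undefined (1::real) \<in> span (x ` {..<n})" using span_sample by simp
  moreover assume "\<not> 0 < n"
  ultimately have "axis undefined (1::real) = (0::real^'d)" by simp
  then show False by (metis axis_nth zero_index zero_neq_one)
qed

lemma form_pos: "spd P \<Longrightarrow> i \<in> nonzero_samples \<Longrightarrow> 0 < x i \<bullet> (P *v x i)"
  by (simp add: spd_def nonzero_samples_def)

lemma min_weight_basis_count:
  fixes u :: "nat \<Rightarrow> real"
  assumes B: "B \<in> basis_indices x nonzero_samples"
    and min: "\<And>B'. B' \<in> basis_indices x nonzero_samples \<Longrightarrow> sum u B \<le> sum u B'"
    and "i \<in> nonzero_samples" "u i \<le> \<tau>" and "j \<in> B" "\<tau> < u j"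
  shows "(real CARD('d) - 2 * \<alpha>) * real (card {i \<in> nonzero_samples. u i \<le> \<tau>}) < real n * real (card {b\<in>B. u b \<le> \<tau>})"
proof -
  have \<kappa>: "0 < real CARD('d) - 2 * \<alpha>" using \<alpha>_less by linarith
  define Bt where "Bt = {b\<in>B. u b \<le> \<tau>}"
  define L where "L = span (x ` Bt)"
  have "finite B" using B by (rule basis_indices_finite)
  have "Bt \<subseteq> B" by (auto simp: Bt_def)
  then have "independent (x ` Bt)" "inj_on x Bt"
    using B independent_mono[of "x ` B" "x ` Bt"] inj_on_subset[of x B Bt]
    unfolding basis_indices_def by auto
  then have dim: "dim L = card Bt" by (simp add: L_def dim_eq_card_independent card_image)
  have sub: "{i \<in> nonzero_samples. u i \<le> \<tau>} \<subseteq> {i. i < n \<and> x i \<in> L}"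
    using min_weight_basis_span[OF B min] by (auto simp: L_def Bt_def nonzero_samples_def)
  then have "x i \<in> L" "x i \<noteq> 0" using assms(3,4) by (auto simp: nonzero_samples_def)
  then have "Bt \<noteq> {}" by (auto simp: L_def)
  then have dim_pos: "1 \<le> dim L" using \<open>finite B\<close> by (simp add: dim Suc_le_eq card_gt_0_iff Bt_def)
  have "j \<notin> Bt" using assms(6) by (simp add: Bt_def)
  then have "Bt \<subset> B" using assms(5) \<open>Bt \<subseteq> B\<close> by blast
  then have dim_less: "dim L < CARD('d)"
    using psubset_card_mono[OF \<open>finite B\<close>] B by (auto simp: dim basis_indices_def)
  have "subspace L" by (simp add: L_def subspace_span)
  have "real (card {i. i < n \<and> x i \<in> L}) / real n < real (card Bt) / (real CARD('d) - 2 * \<alpha>)"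
    using subspace_fraction[OF \<open>subspace L\<close> dim_pos dim_less] unfolding dim .
  then have less: "(real CARD('d) - 2 * \<alpha>) * real (card {i. i < n \<and> x i \<in> L}) < real n * real (card Bt)"
    using n_pos \<kappa> by (simp add: field_simps)
  have "card {i \<in> nonzero_samples. u i \<le> \<tau>} \<le> card {i. i < n \<and> x i \<in> L}"
    using sub by (intro card_mono) auto
  then have "(real CARD('d) - 2 * \<alpha>) * real (card {i \<in> nonzero_samples. u i \<le> \<tau>})
      \<le> (real CARD('d) - 2 * \<alpha>) * real (card {i. i < n \<and> x i \<in> L})"
    using \<kappa> by simp
  then show ?thesis using less unfolding Bt_def by linarith
qed

lemma loglik_eq:
  assumes "spd P"
  shows "loglik P = real n / 2 * ln (det P)
     + (\<alpha> - real CARD('d) / 2) * (\<Sum>i\<in>nonzero_samples. ln (x i \<bullet> (P *v x i)))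
     - (\<Sum>i\<in>nonzero_samples. exp (\<beta> * (ln (x i \<bullet> (P *v x i)) - ln b)))"
  using kotz_precision_loglik_eq[OF assms b_pos, of \<alpha> \<beta> n x]
  by (simp add: nonzero_samples_def sum_subtractf sum_distrib_left)

lemma min_weight_basis_layer_bound:
  fixes u :: "nat \<Rightarrow> real"
  assumes B: "B \<in> basis_indices x nonzero_samples"
    and min: "\<And>B'. B' \<in> basis_indices x nonzero_samples \<Longrightarrow> sum u B \<le> sum u B'"
    and gap: "\<And>r a. r \<le> CARD('d) \<Longrightarrow> a \<le> n \<Longrightarrow>
      (real CARD('d) - 2 * \<alpha>) * real a < real n * real r \<Longrightarrow> \<gamma> \<le> real n * real r - (real CARD('d) - 2 * \<alpha>) * real a"
  defines "m \<equiv> Min (u ` nonzero_samples)" and "M \<equiv> Max (u ` B)"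
  shows "m \<le> M"
    and "((real CARD('d) - 2 * \<alpha>) * real (card nonzero_samples) - real n * real CARD('d)) * M + \<gamma> * (M - m)
      \<le> (real CARD('d) - 2 * \<alpha>) * (\<Sum>i\<in>nonzero_samples. min (u i) M) - real n * (\<Sum>b\<in>B. u b)"
proof -
  define N where "N = nonzero_samples"
  define k where "k = real CARD('d) - 2 * \<alpha>"
  have "finite N" by (simp add: N_def finite_nonzero_samples)
  have "finite B" "B \<subseteq> N" "card B = CARD('d)" "B \<noteq> {}"
    using B basis_indices_finite[OF B] by (auto simp: basis_indices_def N_def)
  then have "N \<noteq> {}" by auto
  have "m \<in> u ` N" unfolding m_def N_def using \<open>finite N\<close> \<open>N \<noteq> {}\<close> by (intro Min_in) (auto simp: N_def)
  then obtain i0 where "i0 \<in> N" "u i0 = m" by auto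
  have "M \<in> u ` B" unfolding M_def using \<open>finite B\<close> \<open>B \<noteq> {}\<close> by (intro Max_in) auto
  then obtain j where "j \<in> B" "u j = M" by auto
  have low: "\<forall>i\<in>N. m \<le> u i" using \<open>finite N\<close> by (simp add: m_def N_def)
  have range: "\<forall>b\<in>B. m \<le> u b \<and> u b \<le> M" using \<open>finite B\<close> \<open>B \<subseteq> N\<close> low by (auto simp: M_def)
  then show "m \<le> M" using \<open>j \<in> B\<close> by (meson order.trans)
  \<comment> \<open>the subspace condition, applied to the span of the basis vectors below level \<tau>\<close>
  have slope: "\<gamma> \<le> real n * real (card {b\<in>B. u b \<le> \<tau>}) - k * real (card {i\<in>N. u i \<le> \<tau>})"
    if "m \<le> \<tau>" "\<tau> < M" for \<tau>
  proof (rule gap[folded k_def])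
    show "card {b\<in>B. u b \<le> \<tau>} \<le> CARD('d)"
      using card_mono[OF \<open>finite B\<close>, of "{b\<in>B. u b \<le> \<tau>}"] \<open>card B = CARD('d)\<close> by auto
    show "card {i\<in>N. u i \<le> \<tau>} \<le> n"
      using card_mono[OF \<open>finite N\<close>, of "{i\<in>N. u i \<le> \<tau>}"] card_nonzero_samples_le by (auto simp: N_def)
    show "k * real (card {i\<in>N. u i \<le> \<tau>}) < real n * real (card {b\<in>B. u b \<le> \<tau>})"
      unfolding k_def N_def
      by (rule min_weight_basis_count[OF B min])
        (use \<open>i0 \<in> N\<close> \<open>u i0 = m\<close> \<open>j \<in> B\<close> \<open>u j = M\<close> that in \<open>auto simp: N_def\<close>)
  qed
  have "(k * real (card N) - real n * real CARD('d)) * M + \<gamma> * (M - m)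
      \<le> k * (\<Sum>i\<in>N. min (u i) M) - real n * (\<Sum>b\<in>B. u b)"
    using layer_cake_bound[OF \<open>finite N\<close> \<open>finite B\<close> \<open>m \<le> M\<close> low range slope] \<open>card B = CARD('d)\<close>
    by simp
  then show "((real CARD('d) - 2 * \<alpha>) * real (card nonzero_samples) - real n * real CARD('d)) * M + \<gamma> * (M - m)
      \<le> (real CARD('d) - 2 * \<alpha>) * (\<Sum>i\<in>nonzero_samples. min (u i) M) - real n * (\<Sum>b\<in>B. u b)"
    by (simp only: k_def N_def)
qed

lemma loglik_upper_bound_at:
  fixes P :: "real^'d^'d"
  assumes "spd P"
    and det_bound: "\<And>B. B \<in> basis_indices x nonzero_samples \<Longrightarrow>
      ln (det P) \<le> (\<Sum>b\<in>B. ln (x b \<bullet> (P *v x b))) + C"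
    and gap: "\<And>r a. r \<le> CARD('d) \<Longrightarrow> a \<le> n \<Longrightarrow>
      (real CARD('d) - 2 * \<alpha>) * real a < real n * real r \<Longrightarrow> \<gamma> \<le> real n * real r - (real CARD('d) - 2 * \<alpha>) * real a"
  obtains m M where "m \<le> M" and "\<forall>i\<in>nonzero_samples. m \<le> ln (x i \<bullet> (P *v x i))"
    and "\<exists>j\<in>nonzero_samples. ln (x j \<bullet> (P *v x j)) = M"
    and "loglik P \<le> real n / 2 * C
        + (real n * real CARD('d) - (real CARD('d) - 2 * \<alpha>) * real (card nonzero_samples)) / 2 * M
        - \<gamma> / 2 * (M - m) - (\<Sum>i\<in>nonzero_samples. exp (\<beta> * (ln (x i \<bullet> (P *v x i)) - ln b)))"
proof -
  define N where "N = nonzero_samples"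
  define k where "k = real CARD('d) - 2 * \<alpha>"
  define u where "u i = ln (x i \<bullet> (P *v x i))" for i
  have "finite (basis_indices x N)" "basis_indices x N \<noteq> {}"
    using finite_basis_indices[OF finite_nonzero_samples] basis_indices_nonempty[OF span_nonzero_samples]
    by (auto simp: N_def)
  then obtain B where B: "B \<in> basis_indices x N" and min: "\<And>B'. B' \<in> basis_indices x N \<Longrightarrow> sum u B \<le> sum u B'"
    using arg_min_if_finite[of "basis_indices x N" "sum u"] by (metis not_le)
  define m where "m = Min (u ` N)"
  define M where "M = Max (u ` B)"
  note layer = min_weight_basis_layer_bound[OF B[unfolded N_def] min[unfolded N_def] gap,
      folded N_def k_def, folded m_def M_def]
  have "ln (det P) \<le> (\<Sum>b\<in>B. u b) + C" using det_bound B by (simp add: u_def N_def)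
  then have det: "real n / 2 * ln (det P) \<le> real n / 2 * ((\<Sum>b\<in>B. u b) + C)"
    by (intro mult_left_mono) auto
  have min: "(\<alpha> - real CARD('d) / 2) * (\<Sum>i\<in>N. u i) \<le> (\<alpha> - real CARD('d) / 2) * (\<Sum>i\<in>N. min (u i) M)"
    using \<alpha>_less by (intro mult_left_mono_neg sum_mono) auto
  have "loglik P = real n / 2 * ln (det P) + (\<alpha> - real CARD('d) / 2) * (\<Sum>i\<in>N. u i)
      - (\<Sum>i\<in>N. exp (\<beta> * (u i - ln b)))"
    unfolding loglik_eq[OF \<open>spd P\<close>] u_def N_def ..
  also have "\<dots> \<le> real n / 2 * ((\<Sum>b\<in>B. u b) + C) + (\<alpha> - real CARD('d) / 2) * (\<Sum>i\<in>N. min (u i) M)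
      - (\<Sum>i\<in>N. exp (\<beta> * (u i - ln b)))"
    using det min by linarith
  also have "\<dots> = real n / 2 * C - (k * (\<Sum>i\<in>N. min (u i) M) - real n * (\<Sum>b\<in>B. u b)) / 2
      - (\<Sum>i\<in>N. exp (\<beta> * (u i - ln b)))"
    by (simp add: k_def field_simps)
  also have "\<dots> \<le> real n / 2 * C - ((k * real (card N) - real n * real CARD('d)) * M + \<gamma> * (M - m)) / 2
      - (\<Sum>i\<in>N. exp (\<beta> * (u i - ln b)))"
    using layer(2) by (intro diff_right_mono diff_left_mono divide_right_mono) auto
  also have "\<dots> = real n / 2 * C + (real n * real CARD('d) - k * real (card N)) / 2 * M
      - \<gamma> / 2 * (M - m) - (\<Sum>i\<in>N. exp (\<beta> * (u i - ln b)))"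
    by (simp add: field_simps)
  finally have "loglik P \<le> real n / 2 * C + (real n * real CARD('d) - k * real (card N)) / 2 * M
      - \<gamma> / 2 * (M - m) - (\<Sum>i\<in>N. exp (\<beta> * (u i - ln b)))" .
  moreover have "\<forall>i\<in>N. m \<le> u i" using finite_nonzero_samples by (simp add: m_def N_def)
  moreover have "finite B" "B \<subseteq> N" "B \<noteq> {}"
    using B basis_indices_finite[OF B] by (auto simp: basis_indices_def)
  then have "M \<in> u ` B" "B \<subseteq> N" unfolding M_def by (auto intro!: Max_in)
  ultimately show ?thesis
    using that layer(1) unfolding u_def N_def k_def by blast
qed

lemma loglik_upper_bound:
  obtains A c1 G where "c1 > 0" and "G > 0"
    and "\<And>P. spd P \<Longrightarrow> \<exists>m M. m \<le> M \<and> (\<forall>i\<in>nonzero_samples. m \<le> ln (x i \<bullet> (P *v x i)))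
      \<and> (\<exists>j\<in>nonzero_samples. ln (x j \<bullet> (P *v x j)) = M)
      \<and> loglik P \<le> A + c1 * M - G * (M - m) - (\<Sum>i\<in>nonzero_samples. exp (\<beta> * (ln (x i \<bullet> (P *v x i)) - ln b)))"
proof -
  obtain C where C: "\<And>B P. B \<in> basis_indices x nonzero_samples \<Longrightarrow> spd P \<Longrightarrow>
      ln (det P) \<le> (\<Sum>b\<in>B. ln (x b \<bullet> (P *v x b))) + C"
    using ln_det_le_sum_ln_basis_forms[OF finite_nonzero_samples] by blast
  obtain \<gamma> where "\<gamma> > 0" and gap: "\<And>r a. r \<le> CARD('d) \<Longrightarrow> a \<le> n \<Longrightarrow>
      (real CARD('d) - 2 * \<alpha>) * real a < real n * real r \<Longrightarrow> \<gamma> \<le> real n * real r - (real CARD('d) - 2 * \<alpha>) * real a"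
    using uniform_gap_on_grid[where R = "CARD('d)" and K = n and p = "real n" and q = "real CARD('d) - 2 * \<alpha>"]
    by blast
  define c1 where "c1 = (real n * real CARD('d) - (real CARD('d) - 2 * \<alpha>) * real (card nonzero_samples)) / 2"
  have "(real CARD('d) - 2 * \<alpha>) * real (card nonzero_samples) \<le> (real CARD('d) - 2 * \<alpha>) * real n"
    using card_nonzero_samples_le \<alpha>_less by (intro mult_left_mono) auto
  also have "\<dots> < real CARD('d) * real n" using \<alpha>_pos n_pos by simp
  finally have "c1 > 0" by (simp add: c1_def mult.commute)
  show ?thesis
  proof (rule that[of c1 "\<gamma> / 2" "real n / 2 * C"])
    fix P :: "real^'d^'d" assume "spd P"
    then obtain m M where "m \<le> M" "\<forall>i\<in>nonzero_samples. m \<le> ln (x i \<bullet> (P *v x i))"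
      "\<exists>j\<in>nonzero_samples. ln (x j \<bullet> (P *v x j)) = M"
      "loglik P \<le> real n / 2 * C + c1 * M - \<gamma> / 2 * (M - m)
        - (\<Sum>i\<in>nonzero_samples. exp (\<beta> * (ln (x i \<bullet> (P *v x i)) - ln b)))"
      using loglik_upper_bound_at[OF \<open>spd P\<close> C gap] unfolding c1_def by blast
    then show "\<exists>m M. m \<le> M \<and> (\<forall>i\<in>nonzero_samples. m \<le> ln (x i \<bullet> (P *v x i)))
      \<and> (\<exists>j\<in>nonzero_samples. ln (x j \<bullet> (P *v x j)) = M)
      \<and> loglik P \<le> real n / 2 * C + c1 * M - \<gamma> / 2 * (M - m)
        - (\<Sum>i\<in>nonzero_samples. exp (\<beta> * (ln (x i \<bullet> (P *v x i)) - ln b)))"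
      by blast
  qed (use \<open>c1 > 0\<close> \<open>\<gamma> > 0\<close> in auto)
qed

lemma superlevel_log_forms_bounded:
  obtains L U where "\<And>P i. spd P \<Longrightarrow> c \<le> loglik P \<Longrightarrow> i \<in> nonzero_samples \<Longrightarrow>
    L \<le> ln (x i \<bullet> (P *v x i)) \<and> ln (x i \<bullet> (P *v x i)) \<le> U"
proof -
  obtain c1 G A where "c1 > 0" "G > 0" and bound: "\<And>P. spd P \<Longrightarrow> \<exists>m M. m \<le> M
      \<and> (\<forall>i\<in>nonzero_samples. m \<le> ln (x i \<bullet> (P *v x i)))
      \<and> (\<exists>j\<in>nonzero_samples. ln (x j \<bullet> (P *v x j)) = M)
      \<and> loglik P \<le> A + c1 * M - G * (M - m) - (\<Sum>i\<in>nonzero_samples. exp (\<beta> * (ln (x i \<bullet> (P *v x i)) - ln b)))"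
    by (rule loglik_upper_bound) blast
  obtain L U where LU: "\<And>M m v. m \<le> M \<Longrightarrow> m \<le> v \<Longrightarrow>
      c \<le> A + c1 * M - G * (M - m) - exp (\<beta> * (M - ln b)) \<Longrightarrow>
      c \<le> A + c1 * M - G * (M - m) - exp (\<beta> * (v - ln b)) \<Longrightarrow> L \<le> v \<and> v \<le> U"
    using affine_minus_exp_level_bounds[OF \<open>c1 > 0\<close> \<open>G > 0\<close> \<beta>_pos] by blast
  show ?thesis
  proof (rule that)
    fix P i assume "spd P" "c \<le> loglik P" "i \<in> nonzero_samples"
    define u where "u i = ln (x i \<bullet> (P *v x i))" for i
    obtain m M j where "m \<le> M" "\<forall>i\<in>nonzero_samples. m \<le> u i" "j \<in> nonzero_samples" "u j = M"
      and upper: "loglik P \<le> A + c1 * M - G * (M - m) - (\<Sum>i\<in>nonzero_samples. exp (\<beta> * (u i - ln b)))"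
      using bound[OF \<open>spd P\<close>] unfolding u_def by blast
    have level: "c \<le> A + c1 * M - G * (M - m) - exp (\<beta> * (u k - ln b))" if "k \<in> nonzero_samples" for k
    proof -
      have "exp (\<beta> * (u k - ln b)) \<le> (\<Sum>i\<in>nonzero_samples. exp (\<beta> * (u i - ln b)))"
        using that finite_nonzero_samples by (intro member_le_sum) auto
      then show ?thesis using upper \<open>c \<le> loglik P\<close> by linarith
    qed
    show "L \<le> u i \<and> u i \<le> U"
      using LU[OF \<open>m \<le> M\<close> _ level[of j, unfolded \<open>u j = M\<close>] level] \<open>i \<in> nonzero_samples\<close>
        \<open>\<forall>i\<in>nonzero_samples. m \<le> u i\<close> \<open>j \<in> nonzero_samples\<close> by blast
  qed
qed

lemma superlevel_entries_bounded:
  obtains R where "\<And>P i j. spd P \<Longrightarrow> c \<le> loglik P \<Longrightarrow> \<bar>P$i$j\<bar> \<le> R"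
proof -
  obtain L U where LU: "\<And>P i. spd P \<Longrightarrow> c \<le> loglik P \<Longrightarrow> i \<in> nonzero_samples \<Longrightarrow>
      L \<le> ln (x i \<bullet> (P *v x i)) \<and> ln (x i \<bullet> (P *v x i)) \<le> U"
    by (rule superlevel_log_forms_bounded) blast
  obtain K where K: "\<And>P T j l. psd P \<Longrightarrow> (\<forall>v\<in>x ` {..<n}. v \<bullet> (P *v v) \<le> T) \<Longrightarrow> \<bar>P$j$l\<bar> \<le> K * T"
    by (rule psd_entries_bounded[OF finite_imageI[OF finite_lessThan] span_sample]) blast
  show ?thesis
  proof (rule that)
    fix P :: "real^'d^'d" and i j assume "spd P" "c \<le> loglik P"
    have "\<forall>v\<in>x ` {..<n}. v \<bullet> (P *v v) \<le> exp U"
    proof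
      fix v assume "v \<in> x ` {..<n}"
      then obtain i where "i < n" "v = x i" by blast
      show "v \<bullet> (P *v v) \<le> exp U"
      proof (cases "x i = 0")
        case False
        then have "i \<in> nonzero_samples" using \<open>i < n\<close> by (simp add: nonzero_samples_def)
        then have "ln (v \<bullet> (P *v v)) \<le> U" using LU[OF \<open>spd P\<close> \<open>c \<le> loglik P\<close>] \<open>v = x i\<close> by blast
        then show ?thesis using form_pos[OF \<open>spd P\<close> \<open>i \<in> nonzero_samples\<close>] \<open>v = x i\<close>
          by (metis exp_le_cancel_iff exp_ln)
      qed (simp add: \<open>v = x i\<close>)
    qed
    then show "\<bar>P$i$j\<bar> \<le> K * exp U" using K[OF spd_imp_psd[OF \<open>spd P\<close>]] by blast
  qed
qed

lemma superlevel_det_bounded_below: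
  obtains \<delta> where "\<delta> > 0" and "\<And>P. spd P \<Longrightarrow> c \<le> loglik P \<Longrightarrow> \<delta> \<le> det P"
proof -
  obtain L U where LU: "\<And>P i. spd P \<Longrightarrow> c \<le> loglik P \<Longrightarrow> i \<in> nonzero_samples \<Longrightarrow>
      L \<le> ln (x i \<bullet> (P *v x i)) \<and> ln (x i \<bullet> (P *v x i)) \<le> U"
    by (rule superlevel_log_forms_bounded) blast
  define \<delta> where "\<delta> = exp (2 / real n * (c - (\<alpha> - real CARD('d) / 2) * (real (card nonzero_samples) * L)))"
  show ?thesis
  proof (rule that)
    show "\<delta> > 0" by (simp add: \<delta>_def)
    fix P :: "real^'d^'d" assume "spd P" "c \<le> loglik P"
    have "real (card nonzero_samples) * L \<le> (\<Sum>i\<in>nonzero_samples. ln (x i \<bullet> (P *v x i)))"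
      using LU[OF \<open>spd P\<close> \<open>c \<le> loglik P\<close>] by (intro sum_bounded_below) blast
    then have "(\<alpha> - real CARD('d) / 2) * (\<Sum>i\<in>nonzero_samples. ln (x i \<bullet> (P *v x i)))
        \<le> (\<alpha> - real CARD('d) / 2) * (real (card nonzero_samples) * L)"
      using \<alpha>_less by (intro mult_left_mono_neg) auto
    moreover have "0 \<le> (\<Sum>i\<in>nonzero_samples. exp (\<beta> * (ln (x i \<bullet> (P *v x i)) - ln b)))"
      by (intro sum_nonneg) simp
    ultimately have "c \<le> real n / 2 * ln (det P) + (\<alpha> - real CARD('d) / 2) * (real (card nonzero_samples) * L)"
      using \<open>c \<le> loglik P\<close> loglik_eq[OF \<open>spd P\<close>] by linarith
    then have "2 / real n * (c - (\<alpha> - real CARD('d) / 2) * (real (card nonzero_samples) * L)) \<le> ln (det P)"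
      using n_pos by (simp add: field_simps)
    then show "\<delta> \<le> det P" unfolding \<delta>_def using ln_ge_iff[OF spd_det_pos[OF \<open>spd P\<close>]] by blast
  qed
qed

lemma loglik_attains_max: "\<exists>P. spd P \<and> (\<forall>Q. spd Q \<longrightarrow> loglik Q \<le> loglik P)"
proof -
  obtain R where entries: "\<And>P i j. spd P \<Longrightarrow> loglik (mat 1) \<le> loglik P \<Longrightarrow> \<bar>P$i$j\<bar> \<le> R"
    by (rule superlevel_entries_bounded) blast
  obtain \<delta> where "\<delta> > 0" and det: "\<And>P. spd P \<Longrightarrow> loglik (mat 1) \<le> loglik P \<Longrightarrow> \<delta> \<le> det P"
    by (rule superlevel_det_bounded_below) blast
  define K where "K = {P::real^'d^'d. psd P \<and> (\<forall>i j. \<bar>P$i$j\<bar> \<le> max 1 R) \<and> min 1 \<delta> \<le> det P}"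
  have "compact K" unfolding K_def by (rule compact_psd_box)
  moreover have "K \<subseteq> {P. spd P}"
  proof
    fix P assume "P \<in> K"
    then have "psd P" "det P \<noteq> 0" using \<open>\<delta> > 0\<close> by (auto simp: K_def)
    then show "P \<in> {P. spd P}" by (simp add: psd_invertible_imp_spd invertible_det_nz)
  qed
  moreover from this have "continuous_on K loglik"
    by (rule continuous_on_subset[OF continuous_on_kotz_precision_loglik[OF b_pos]])
  moreover have "mat 1 \<in> K"
  proof -
    have "psd (mat 1)" by (simp add: psd_def transpose_mat)
    moreover have "\<bar>(mat 1 :: real^'d^'d) $ i $ j\<bar> \<le> max 1 R" for i j by (simp add: mat_def le_max_iff_disj)
    ultimately show ?thesis by (simp add: K_def)
  qed
  moreover have "P \<in> K" if "spd P" "loglik (mat 1) \<le> loglik P" for P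
    using entries[OF that] det[OF that] spd_imp_psd[OF \<open>spd P\<close>]
    by (auto simp: K_def le_max_iff_disj min_le_iff_disj)
  ultimately have "\<exists>P\<in>{P. spd P}. \<forall>Q\<in>{P. spd P}. loglik Q \<le> loglik P"
    by (intro continuous_attains_sup_superlevel) auto
  then show ?thesis by blast
qed

end

theorem theorem45:
  fixes \<alpha> b \<beta> :: real and n :: nat and x :: "nat \<Rightarrow> real^'d"
  assumes "\<alpha> > 0" and "b > 0" and "\<beta> > 0"
    and "\<alpha> < real CARD('d) / 2"
    and "span (x ` {..<n}) = UNIV"
    and "\<And>L :: (real^'d) set. subspace L \<Longrightarrow> 1 \<le> dim L \<Longrightarrow> dim L < CARD('d) \<Longrightarrow>
           real (card {i. i < n \<and> x i \<in> L}) / real n < real (dim L) / (real CARD('d) - 2 * \<alpha>)"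
  shows "\<exists>S. spd S \<and> (\<forall>T. spd T \<longrightarrow> kotz_loglik \<alpha> b \<beta> n x T \<le> kotz_loglik \<alpha> b \<beta> n x S)"
proof -
  interpret kotz_sample \<alpha> b \<beta> n x using assms by unfold_locales
  obtain P where "spd P" and max: "\<And>Q. spd Q \<Longrightarrow> loglik Q \<le> loglik P"
    using loglik_attains_max by blast
  have "kotz_loglik \<alpha> b \<beta> n x T \<le> kotz_loglik \<alpha> b \<beta> n x (matrix_inv P)" if "spd T" for T
  proof -
    have "kotz_loglik \<alpha> b \<beta> n x T = loglik (matrix_inv T)"
      by (rule kotz_loglik_eq_precision[OF \<open>spd T\<close>])
    also have "\<dots> \<le> loglik P" by (rule max[OF spd_matrix_inv[OF \<open>spd T\<close>]])
    also have "\<dots> = kotz_loglik \<alpha> b \<beta> n x (matrix_inv P)"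
      using kotz_loglik_eq_precision[OF spd_matrix_inv[OF \<open>spd P\<close>]]
      by (simp add: matrix_inv_matrix_inv spd_invertible \<open>spd P\<close>)
    finally show ?thesis .
  qed
  then show ?thesis using spd_matrix_inv[OF \<open>spd P\<close>] by blast
qed

end
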